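(* Let $k\in\mathbb N_0$ and $f\in\mathcal C^k(\mathbb S^2)$. Then the DFS function $\tilde f$ of $f$ belongs to $\mathcal C^k(\mathbb T^2)$ and $$\|\tilde f\|_{\mathcal C^k(\mathbb T^2)}\le\tfrac34(k+3)!\,\|f\|_{\mathcal C^k(\mathbb S^2)}.$$
   Context: Notation: $\|\cdot\|$ Euclidean norm; $B^d_k:=\{\beta\in\mathbb N_0^d: |\beta|=\sum_i\beta_i\le k\}$. For open $U\subset\mathbb R^d$: $\mathcal C(U)$ is the set of bounded uniformly continuous $f\colon U\to\mathbb C$; for $k\ge1$, $\mathcal C^k(U)$ consists of $f$ whose classical partial derivatives $D^\beta f$, $\beta\in B^d_k$, exist and lie in $\mathcal C(U)$, with $\|f\|_{\mathcal C^k(U)}=\sum_{\beta\in B^d_k}\sup_U|D^\beta f|$ ($\mathcal C^0=\mathcal C$). Torus: $\mathbb T^2=\mathbb R^2/(2\pi\mathbb Z^2)$, functions identified with $2\pi$-biperiodic functions on $\mathbb R^2$; $\mathcal C^k(\mathbb T^2)$ is the set of $2\pi$-biperiodic elements of $\mathcal C^k(\mathbb R^2)$ with the same norm. Sphere: $\mathbb S^2=\{x\in\mathbb R^3:\|x\|=1\}$. For $f\colon\mathbb S^2\to\mathbb C$, a $\mathcal C^k$-extension of $f$ is some $f^*\in\mathcal C^k(U)$, $U\supset\mathbb S^2$ open, with $f^*|_{\mathbb S^2}=f$; set $|f^*|^*_{\mathcal C^k(\mathbb S^2)}:=\sum_{\beta\in B^3_k}\sup_{\xi\in\mathbb S^2}|D^\beta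 f^*(\xi)|$ and $\|f\|_{\mathcal C^k(\mathbb S^2)}:=\inf$ of $|f^*|^*_{\mathcal C^k(\mathbb S^2)}$ over all $\mathcal C^k$-extensions; $\mathcal C^k(\mathbb S^2)$ is the set of $f$ with finite norm. DFS: $\phi(\lambda,\theta)=(\cos\lambda\sin\theta,\sin\lambda\sin\theta,\cos\theta)$; the DFS function of $f$ is $\tilde f:=f\circ\phi\colon\mathbb T^2\to\mathbb C$. *)

theory Defs
  imports "HOL-Analysis.Analysis"
begin

definition pd_exists :: "'n::finite \<Rightarrow> ((real,'n) vec \<Rightarrow> complex) \<Rightarrow> (real,'n) vec \<Rightarrow> bool" where
  "pd_exists i f x \<longleftrightarrow> (\<lambda>t::real. f (x + t *\<^sub>R axis i 1)) differentiable (at 0)"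

definition pd :: "'n::finite \<Rightarrow> ((real,'n) vec \<Rightarrow> complex) \<Rightarrow> (real,'n) vec \<Rightarrow> complex" where
  "pd i f x = vector_derivative (\<lambda>t::real. f (x + t *\<^sub>R axis i 1)) (at 0)"

text \<open>Iterated partial derivatives along a list of directions: the head is applied last.\<close>
fun dlist :: "'n::finite list \<Rightarrow> ((real,'n) vec \<Rightarrow> complex) \<Rightarrow> (real,'n) vec \<Rightarrow> complex" where
  "dlist [] f = f"
| "dlist (i # is) f = pd i (dlist is f)"

fun dlist_ok :: "((real,'n::finite) vec) set \<Rightarrow> 'n list \<Rightarrow> ((real,'n) vec \<Rightarrow> complex) \<Rightarrow> bool" where
  "dlist_ok U [] f = True"
| "dlist_ok U (i # is) f \<longleftrightarrow> dlist_ok U is f \<and> (\<forall>x\<in>U. pd_exists i (dlist is f) x)"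

text \<open>Multi-index to direction list: D^beta = d_1^{beta_1} ... d_d^{beta_d}.\<close>
definition mlist :: "('n::{finite,linorder} \<Rightarrow> nat) \<Rightarrow> 'n list" where
  "mlist \<beta> = concat (map (\<lambda>i. replicate (\<beta> i) i) (sorted_list_of_set UNIV))"

definition Dpart :: "('n::{finite,linorder} \<Rightarrow> nat) \<Rightarrow> ((real,'n) vec \<Rightarrow> complex) \<Rightarrow> (real,'n) vec \<Rightarrow> complex" where
  "Dpart \<beta> f = dlist (mlist \<beta>) f"

definition Dpart_exists :: "((real,'n::{finite,linorder}) vec) set \<Rightarrow> ('n \<Rightarrow> nat) \<Rightarrow> ((real,'n) vec \<Rightarrow> complex) \<Rightarrow> bool" where
  "Dpart_exists U \<beta> f \<longleftrightarrow> dlist_ok U (mlist \<beta>) f"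

definition multi_idx :: "nat \<Rightarrow> ('n::finite \<Rightarrow> nat) set" where
  "multi_idx k = {\<beta>. (\<Sum>i\<in>UNIV. \<beta> i) \<le> k}"

definition Ck :: "nat \<Rightarrow> ((real,'n::{finite,linorder}) vec) set \<Rightarrow> ((real,'n) vec \<Rightarrow> complex) \<Rightarrow> bool" where
  "Ck k U f \<longleftrightarrow> open U \<and> (\<forall>\<beta>\<in>multi_idx k. Dpart_exists U \<beta> f \<and>
      bounded (Dpart \<beta> f ` U) \<and> uniformly_continuous_on U (Dpart \<beta> f))"

definition Ck_norm :: "nat \<Rightarrow> ((real,'n::{finite,linorder}) vec) set \<Rightarrow> ((real,'n) vec \<Rightarrow> complex) \<Rightarrow> real" where
  "Ck_norm k U f = (\<Sum>\<beta>\<in>multi_idx k. (SUP x\<in>U. cmod (Dpart \<beta> f x)))"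

definition Ck_torus :: "nat \<Rightarrow> (real^2 \<Rightarrow> complex) \<Rightarrow> bool" where
  "Ck_torus k f \<longleftrightarrow> Ck k UNIV f \<and> (\<forall>x i. f (x + (2*pi) *\<^sub>R axis i 1) = f x)"

definition Ck_torus_norm :: "nat \<Rightarrow> (real^2 \<Rightarrow> complex) \<Rightarrow> real" where
  "Ck_torus_norm k f = Ck_norm k UNIV f"

abbreviation S2 :: "(real^3) set" where
  "S2 \<equiv> sphere 0 1"

definition is_Ck_extension :: "nat \<Rightarrow> (real^3 \<Rightarrow> complex) \<Rightarrow> (real^3) set \<Rightarrow> (real^3 \<Rightarrow> complex) \<Rightarrow> bool" where
  "is_Ck_extension k f U g \<longleftrightarrow> S2 \<subseteq> U \<and> Ck k U g \<and> (\<forall>\<xi>\<in>S2. g \<xi> = f \<xi>)"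

definition ext_seminorm :: "nat \<Rightarrow> (real^3 \<Rightarrow> complex) \<Rightarrow> real" where
  "ext_seminorm k g = (\<Sum>\<beta>\<in>multi_idx k. (SUP \<xi>\<in>S2. cmod (Dpart \<beta> g \<xi>)))"

definition Ck_sphere_norm :: "nat \<Rightarrow> (real^3 \<Rightarrow> complex) \<Rightarrow> real" where
  "Ck_sphere_norm k f = Inf {ext_seminorm k g | g U. is_Ck_extension k f U g}"

text \<open>f in C^k(S^2) iff its norm is finite, i.e. some C^k-extension exists
  (only the values of f on S2 are relevant).\<close>
definition Ck_sphere :: "nat \<Rightarrow> (real^3 \<Rightarrow> complex) \<Rightarrow> bool" where
  "Ck_sphere k f \<longleftrightarrow> (\<exists>U g. is_Ck_extension k f U g)"

definition dfs_phi :: "real^2 \<Rightarrow> real^3" where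
  "dfs_phi p = vector [cos (p$1) * sin (p$2), sin (p$1) * sin (p$2), cos (p$2)]"

definition dfs :: "(real^3 \<Rightarrow> complex) \<Rightarrow> real^2 \<Rightarrow> complex" where
  "dfs f = f \<circ> dfs_phi"

end

(* Let g be a C^k-extension of f. By the product and chain rules, a partial derivative of
   order n of the DFS function g o phi is a sum of at most (n+2)!/2 terms, each a product of
   sines and cosines of lambda and theta (hence bounded by 1) times a partial derivative of g of
   order at most n, evaluated on the sphere. Summing over all multi-indices of order at most k
   gives the bound (k+3)!/2 times the extension seminorm of g; taking the infimum over all
   extensions gives the norm of f. Partial derivatives of g arise here in arbitrary order, and
   Schwarz's theorem identifies them with the D^alpha g. Periodicity of phi makes all derivatives
   of g o phi uniformly continuous. *)

theory Submission
  imports Defs "HOL-Library.Periodic_Fun"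
begin

lemma pd_has_vector_derivative:
  "pd_exists i h x \<Longrightarrow> ((\<lambda>t. h (x + t *\<^sub>R axis i 1)) has_vector_derivative pd i h x) (at 0)"
  unfolding pd_exists_def pd_def by (simp add: vector_derivative_works[symmetric])

lemma pd_eqI:
  "((\<lambda>t. h (x + t *\<^sub>R axis i 1)) has_vector_derivative D) (at 0) \<Longrightarrow> pd_exists i h x \<and> pd i h x = D"
  unfolding pd_exists_def pd_def by (metis differentiableI_vector vector_derivative_at)

lemma pd_has_vector_derivative_along_line:
  assumes "pd_exists i h (y + \<tau> *\<^sub>R axis i 1)"
  shows "((\<lambda>t. h (y + t *\<^sub>R axis i 1)) has_vector_derivative pd i h (y + \<tau> *\<^sub>R axis i 1)) (at \<tau>)"
proof -
  have "((\<lambda>t. h (y + \<tau> *\<^sub>R axis i 1 + t *\<^sub>R axis i 1)) \<circ> (\<lambda>t. t - \<tau>) has_vector_derivative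
      1 *\<^sub>R pd i h (y + \<tau> *\<^sub>R axis i 1)) (at \<tau>)"
    by (rule vector_diff_chain_at) (use pd_has_vector_derivative[OF assms] in
        \<open>auto intro!: derivative_eq_intros\<close>)
  then show ?thesis by (simp add: o_def algebra_simps)
qed

lemma pd_cong_open:
  assumes "open U" "x \<in> U" "\<And>y. y \<in> U \<Longrightarrow> h y = h' y"
  shows "pd_exists i h x \<longleftrightarrow> pd_exists i h' x" and "pd i h x = pd i h' x"
proof -
  have "open ((\<lambda>t. x + t *\<^sub>R axis i 1) -` U)"
    by (rule open_vimage[OF assms(1)]) (intro continuous_intros)
  then have "\<forall>\<^sub>F t in nhds 0. x + t *\<^sub>R axis i 1 \<in> U"
    using eventually_nhds_in_open assms(2) by fastforce
  then have ev: "\<forall>\<^sub>F t in nhds 0. t \<in> UNIV \<longrightarrow> h (x + t *\<^sub>R axis i 1) = h' (x + t *\<^sub>R axis i 1)"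
    by eventually_elim (simp add: assms(3))
  show eq: "pd i h x = pd i h' x"
    unfolding pd_def by (rule vector_derivative_cong_eq[OF ev]) simp_all
  have "\<And>D. ((\<lambda>t. h (x + t *\<^sub>R axis i 1)) has_vector_derivative D) (at 0) \<longleftrightarrow>
      ((\<lambda>t. h' (x + t *\<^sub>R axis i 1)) has_vector_derivative D) (at 0)"
    using has_vector_derivative_cong_ev[OF ev] assms(2,3) by simp
  then show "pd_exists i h x \<longleftrightarrow> pd_exists i h' x"
    unfolding pd_exists_def vector_derivative_works using eq[unfolded pd_def] by simp
qed

lemma norm_increment_le_vector_derivative_bound:
  fixes f :: "real \<Rightarrow> 'a::real_normed_vector"
  assumes "\<And>t. \<bar>t\<bar> \<le> \<bar>s\<bar> \<Longrightarrow> (f has_vector_derivative f' t) (at t)"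
    and "\<And>t. \<bar>t\<bar> \<le> \<bar>s\<bar> \<Longrightarrow> norm (f' t) \<le> B"
  shows "norm (f s - f 0) \<le> B * \<bar>s\<bar>"
proof -
  have "norm (f s - f 0) \<le> B * norm (s - 0)"
  proof (rule differentiable_bound[where S="{-\<bar>s\<bar>..\<bar>s\<bar>}"])
    fix t assume "t \<in> {-\<bar>s\<bar>..\<bar>s\<bar>}"
    then have t: "\<bar>t\<bar> \<le> \<bar>s\<bar>" by auto
    show "(f has_derivative (\<lambda>u. u *\<^sub>R f' t)) (at t within {-\<bar>s\<bar>..\<bar>s\<bar>})"
      using assms(1)[OF t] unfolding has_vector_derivative_def by (rule has_derivative_at_withinI)
    have "onorm (\<lambda>u::real. u *\<^sub>R f' t) = norm (f' t)"
      using onorm_scaleR_left[OF bounded_linear_ident, of "f' t"] onorm_id[where 'a=real] by simp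
    then show "onorm (\<lambda>u. u *\<^sub>R f' t) \<le> B" using assms(2)[OF t] by simp
  qed auto
  then show ?thesis by simp
qed

lemma norm_line_increment_le:
  fixes h :: "(real,'n::finite) vec \<Rightarrow> complex"
  assumes "\<And>\<sigma>. \<bar>\<sigma>\<bar> \<le> \<bar>s\<bar> \<Longrightarrow>
      pd_exists i h (y + \<sigma> *\<^sub>R axis i 1) \<and> norm (pd i h (y + \<sigma> *\<^sub>R axis i 1) - c) \<le> e"
  shows "norm (h (y + s *\<^sub>R axis i 1) - h y - of_real s * c) \<le> e * \<bar>s\<bar>"
proof -
  have "norm ((h (y + s *\<^sub>R axis i 1) - of_real s * c) - (h (y + 0 *\<^sub>R axis i 1) - of_real 0 * c))
      \<le> e * \<bar>s\<bar>"
  proof (rule norm_increment_le_vector_derivative_bound)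
    fix \<sigma> :: real assume "\<bar>\<sigma>\<bar> \<le> \<bar>s\<bar>"
    note pd = assms[OF this]
    then show "((\<lambda>\<sigma>. h (y + \<sigma> *\<^sub>R axis i 1) - of_real \<sigma> * c) has_vector_derivative
        pd i h (y + \<sigma> *\<^sub>R axis i 1) - c) (at \<sigma>)"
      by (auto intro!: derivative_eq_intros pd_has_vector_derivative_along_line)
    show "norm (pd i h (y + \<sigma> *\<^sub>R axis i 1) - c) \<le> e" using pd by simp
  qed
  then show ?thesis by (simp add: algebra_simps)
qed

lemma open_continuous_on_ball:
  assumes "open U" "x \<in> U" "continuous_on U F" "e > 0"
  obtains r where "r > 0" "ball x r \<subseteq> U" "\<And>y. y \<in> ball x r \<Longrightarrow> dist (F y) (F x) \<le> e"
proof -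
  obtain d where d: "d > 0" "\<And>y. y \<in> U \<Longrightarrow> dist y x < d \<Longrightarrow> dist (F y) (F x) < e"
    using assms(2-4) unfolding continuous_on_iff by metis
  obtain r0 where r0: "r0 > 0" "ball x r0 \<subseteq> U" using assms(1,2) open_contains_ball by blast
  show ?thesis
  proof (rule that[of "min d r0"])
    fix y assume "y \<in> ball x (min d r0)"
    then have "y \<in> U" "dist y x < d" using r0(2) by (auto simp: dist_commute)
    then show "dist (F y) (F x) \<le> e" using d(2) less_imp_le by blast
  qed (use d r0 in auto)
qed

lemma norm_le_L2_componentwise:
  fixes w v :: "(real,'n::finite) vec"
  assumes "\<And>l. \<bar>w$l\<bar> \<le> \<bar>v$l\<bar>"
  shows "norm w \<le> norm v"
  unfolding norm_vec_def by (rule L2_set_mono) (use assms in auto)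

text \<open>Moving from x to x + v one coordinate direction at a time, each leg is controlled by the
  mean value inequality; all intermediate points stay in the ball, since their coordinates are
  bounded by those of v.\<close>
lemma norm_remainder_le_by_partials:
  fixes h :: "(real,'n::finite) vec \<Rightarrow> complex"
  assumes pd: "\<And>y i. y \<in> ball x r \<Longrightarrow> pd_exists i h y \<and> norm (pd i h y - pd i h x) \<le> \<epsilon>"
    and v: "norm v < r" and I: "finite I"
  shows "norm (h (x + (\<Sum>i\<in>I. v$i *\<^sub>R axis i 1)) - h x - (\<Sum>i\<in>I. of_real (v$i) * pd i h x))
           \<le> \<epsilon> * (\<Sum>i\<in>I. \<bar>v$i\<bar>)"
  using I
proof (induction I rule: finite_induct)
  case (insert j I)
  define z where "z = x + (\<Sum>i\<in>I. v$i *\<^sub>R axis i 1)"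
  have in_ball: "z + t *\<^sub>R axis j 1 \<in> ball x r" if "\<bar>t\<bar> \<le> \<bar>v$j\<bar>" for t
  proof -
    have "(z + t *\<^sub>R axis j 1 - x) $ l = (if l \<in> I then v$l else 0) + (if l = j then t else 0)" for l
      using insert.hyps by (simp add: z_def axis_def if_distrib cong: if_cong)
    then have "norm (z + t *\<^sub>R axis j 1 - x) \<le> norm v"
      using that insert.hyps by (intro norm_le_L2_componentwise) auto
    then show ?thesis using v by (simp add: dist_norm norm_minus_commute)
  qed
  have leg: "norm (h (z + v$j *\<^sub>R axis j 1) - h z - of_real (v$j) * pd j h x) \<le> \<epsilon> * \<bar>v$j\<bar>"
    using pd in_ball by (intro norm_line_increment_le) blast
  have step: "x + (\<Sum>i\<in>insert j I. v$i *\<^sub>R axis i 1) = z + v$j *\<^sub>R axis j 1"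
    using insert.hyps by (simp add: z_def algebra_simps)
  have sum_insert: "(\<Sum>i\<in>insert j I. of_real (v$i) * pd i h x) = of_real (v$j) * pd j h x + (\<Sum>i\<in>I. of_real (v$i) * pd i h x)"
    using insert.hyps by simp
  have decomp: "h (x + (\<Sum>i\<in>insert j I. v$i *\<^sub>R axis i 1)) - h x - (\<Sum>i\<in>insert j I. of_real (v$i) * pd i h x)
      = (h (z + v$j *\<^sub>R axis j 1) - of_real (v$j) * pd j h x - h z)
         + (h z - h x - (\<Sum>i\<in>I. of_real (v$i) * pd i h x))"
    unfolding step sum_insert by (simp add: algebra_simps)
  have "norm (h (x + (\<Sum>i\<in>insert j I. v$i *\<^sub>R axis i 1)) - h x - (\<Sum>i\<in>insert j I. of_real (v$i) * pd i h x))
      \<le> norm (h (z + v$j *\<^sub>R axis j 1) - of_real (v$j) * pd j h x - h z)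
         + norm (h z - h x - (\<Sum>i\<in>I. of_real (v$i) * pd i h x))"
    unfolding decomp by (rule norm_triangle_ineq)
  also have "\<dots> \<le> \<epsilon> * \<bar>v$j\<bar> + \<epsilon> * (\<Sum>i\<in>I. \<bar>v$i\<bar>)"
    using leg insert.IH unfolding z_def by (intro add_mono) (auto simp: algebra_simps)
  also have "\<dots> = \<epsilon> * (\<Sum>i\<in>insert j I. \<bar>v$i\<bar>)"
    using insert.hyps by (simp add: distrib_left)
  finally show ?case .
qed simp

lemma has_derivative_of_continuous_pd:
  fixes h :: "(real,'n::finite) vec \<Rightarrow> complex"
  assumes U: "open U" "x \<in> U"
    and ex: "\<And>y i. y \<in> U \<Longrightarrow> pd_exists i h y"
    and cont: "\<And>i. continuous_on U (pd i h)"
  shows "(h has_derivative (\<lambda>v. \<Sum>i\<in>UNIV. of_real (v$i) * pd i h x)) (at x)"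
  unfolding has_derivative_at_alt
proof (intro conjI allI impI)
  show "bounded_linear (\<lambda>v. \<Sum>i\<in>UNIV. of_real (v$i) * pd i h x)"
    by (intro bounded_linear_sum bounded_linear_compose[OF bounded_linear_mult_left
          bounded_linear_compose[OF bounded_linear_of_real bounded_linear_vec_nth]])
  fix e :: real assume "e > 0"
  define \<epsilon> where "\<epsilon> = e / real CARD('n)"
  have "\<epsilon> > 0" using \<open>e > 0\<close> by (simp add: \<epsilon>_def)
  have "continuous_on U (\<lambda>y. \<chi> i. pd i h y)" by (intro continuous_intros cont)
  then obtain r where r: "r > 0" "ball x r \<subseteq> U"
    and close: "\<And>y. y \<in> ball x r \<Longrightarrow> dist (\<chi> i. pd i h y) (\<chi> i. pd i h x) \<le> \<epsilon>"
    using open_continuous_on_ball[OF U _ \<open>\<epsilon> > 0\<close>] by blast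
  have pd: "pd_exists i h y \<and> norm (pd i h y - pd i h x) \<le> \<epsilon>" if "y \<in> ball x r" for y i
  proof
    show "pd_exists i h y" using ex r(2) that by blast
    have "norm (pd i h y - pd i h x) \<le> norm ((\<chi> i. pd i h y) - (\<chi> i. pd i h x))"
      using Finite_Cartesian_Product.norm_nth_le[of "(\<chi> i. pd i h y) - (\<chi> i. pd i h x)" i] by simp
    then show "norm (pd i h y - pd i h x) \<le> \<epsilon>" using close[OF that] by (simp add: dist_norm)
  qed
  show "\<exists>d>0. \<forall>y. norm (y - x) < d \<longrightarrow>
      norm (h y - h x - (\<Sum>i\<in>UNIV. of_real ((y - x)$i) * pd i h x)) \<le> e * norm (y - x)"
  proof (intro exI[of _ r] conjI allI impI)
    fix y assume y: "norm (y - x) < r"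
    have expansion: "x + (\<Sum>i\<in>UNIV. (y - x)$i *\<^sub>R axis i 1) = y"
      using basis_expansion[of "y - x"] by (simp add: scalar_mult_eq_scaleR)
    have "norm (h y - h x - (\<Sum>i\<in>UNIV. of_real ((y - x)$i) * pd i h x))
        \<le> \<epsilon> * (\<Sum>i\<in>UNIV. \<bar>(y - x)$i\<bar>)"
      using norm_remainder_le_by_partials[OF pd y, of UNIV] unfolding expansion by simp
    also have "\<dots> \<le> \<epsilon> * (\<Sum>i\<in>(UNIV::'n set). norm (y - x))"
      using \<open>\<epsilon> > 0\<close> by (intro mult_left_mono sum_mono component_le_norm_cart) auto
    finally show "norm (h y - h x - (\<Sum>i\<in>UNIV. of_real ((y - x)$i) * pd i h x)) \<le> e * norm (y - x)"
      by (simp add: \<epsilon>_def)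
  qed (rule r)
qed

section \<open>Schwarz's theorem\<close>

lemma norm_has_vector_derivative_le:
  fixes \<phi> :: "real \<Rightarrow> 'a::real_normed_vector"
  assumes D: "(\<phi> has_vector_derivative D) (at 0)" and "d > 0"
    and bound: "\<And>s. \<bar>s\<bar> < d \<Longrightarrow> norm (\<phi> s - \<phi> 0 - s *\<^sub>R L) \<le> M * \<bar>s\<bar>"
  shows "norm (D - L) \<le> M"
proof (rule field_le_epsilon)
  fix e :: real assume "e > 0"
  obtain d' where d': "d' > 0" "\<And>s. norm (s - 0) < d' \<Longrightarrow>
      norm (\<phi> s - \<phi> 0 - (s - 0) *\<^sub>R D) \<le> e * norm (s - 0)"
    using D \<open>e > 0\<close> unfolding has_vector_derivative_def has_derivative_at_alt by blast
  define s where "s = min d d' / 2"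
  have s: "s > 0" "\<bar>s\<bar> < d" "norm (s - 0) < d'" using \<open>d > 0\<close> d'(1) by (auto simp: s_def)
  have "s * norm (D - L) = norm ((\<phi> s - \<phi> 0 - s *\<^sub>R L) - (\<phi> s - \<phi> 0 - s *\<^sub>R D))"
    using s(1) by (simp add: algebra_simps flip: scaleR_diff_right)
  also have "\<dots> \<le> M * s + e * s"
    using norm_triangle_ineq4 bound[OF s(2)] d'(2)[OF s(3)] s(1)
    by (smt (verit, best) real_norm_def)
  also have "\<dots> = s * (M + e)" by (simp add: algebra_simps)
  finally show "norm (D - L) \<le> M + e" using s(1) by (simp add: mult_le_cancel_left_pos)
qed

lemma add_two_axis_in_ball:
  fixes x :: "(real,'n::finite) vec"
  assumes "\<bar>\<sigma>\<bar> + \<bar>\<tau>\<bar> < r"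
  shows "x + \<sigma> *\<^sub>R axis a 1 + \<tau> *\<^sub>R axis b 1 \<in> ball x r"
proof -
  have "norm (\<sigma> *\<^sub>R axis a (1::real) + \<tau> *\<^sub>R axis b 1) \<le> \<bar>\<sigma>\<bar> + \<bar>\<tau>\<bar>"
    using norm_triangle_ineq[of "\<sigma> *\<^sub>R axis a (1::real)" "\<tau> *\<^sub>R axis b 1"] by simp
  moreover have "dist x (x + \<sigma> *\<^sub>R axis a 1 + \<tau> *\<^sub>R axis b 1) = norm (\<sigma> *\<^sub>R axis a (1::real) + \<tau> *\<^sub>R axis b 1)"
    by (metis add.assoc add_diff_cancel_left' dist_commute dist_norm)
  ultimately show ?thesis using assms by simp
qed

lemma mixed_second_difference_bound:
  fixes h :: "(real,'n::finite) vec \<Rightarrow> complex"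
  assumes pd: "\<And>y. y \<in> ball x r \<Longrightarrow>
      pd_exists b h y \<and> pd_exists a (pd b h) y \<and> norm (pd a (pd b h) y - c) \<le> e"
    and st: "\<bar>s\<bar> + \<bar>t\<bar> < r"
  shows "norm (h (x + s *\<^sub>R axis a 1 + t *\<^sub>R axis b 1) - h (x + t *\<^sub>R axis b 1)
                - h (x + s *\<^sub>R axis a 1) + h x - of_real (s * t) * c) \<le> e * \<bar>s\<bar> * \<bar>t\<bar>"
proof -
  let ?A = "axis a 1 :: (real,'n) vec" and ?B = "axis b 1 :: (real,'n) vec"
  have in_ball: "x + \<sigma> *\<^sub>R ?A + \<tau> *\<^sub>R ?B \<in> ball x r" if "\<bar>\<sigma>\<bar> \<le> \<bar>s\<bar>" "\<bar>\<tau>\<bar> \<le> \<bar>t\<bar>" for \<sigma> \<tau>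
    using that st by (intro add_two_axis_in_ball) simp
  have inner: "norm (pd b h (x + s *\<^sub>R ?A + \<tau> *\<^sub>R ?B) - pd b h (x + \<tau> *\<^sub>R ?B) - of_real s * c) \<le> e * \<bar>s\<bar>"
    if \<tau>: "\<bar>\<tau>\<bar> \<le> \<bar>t\<bar>" for \<tau>
  proof -
    have "norm (pd b h (x + \<tau> *\<^sub>R ?B + s *\<^sub>R ?A) - pd b h (x + \<tau> *\<^sub>R ?B) - of_real s * c) \<le> e * \<bar>s\<bar>"
    proof (rule norm_line_increment_le)
      fix \<sigma> :: real assume "\<bar>\<sigma>\<bar> \<le> \<bar>s\<bar>"
      then have "x + \<tau> *\<^sub>R ?B + \<sigma> *\<^sub>R ?A \<in> ball x r"
        using in_ball[of \<sigma> \<tau>] \<tau> by (simp add: algebra_simps)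
      then show "pd_exists a (pd b h) (x + \<tau> *\<^sub>R ?B + \<sigma> *\<^sub>R ?A) \<and>
          norm (pd a (pd b h) (x + \<tau> *\<^sub>R ?B + \<sigma> *\<^sub>R ?A) - c) \<le> e"
        using pd by blast
    qed
    then show ?thesis by (simp add: algebra_simps)
  qed
  have "norm ((h (x + s *\<^sub>R ?A + t *\<^sub>R ?B) - h (x + t *\<^sub>R ?B) - of_real t * (of_real s * c))
            - (h (x + s *\<^sub>R ?A + 0 *\<^sub>R ?B) - h (x + 0 *\<^sub>R ?B) - of_real 0 * (of_real s * c)))
        \<le> (e * \<bar>s\<bar>) * \<bar>t\<bar>"
  proof (rule norm_increment_le_vector_derivative_bound)
    fix \<tau> :: real assume \<tau>: "\<bar>\<tau>\<bar> \<le> \<bar>t\<bar>"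
    have "x + s *\<^sub>R ?A + \<tau> *\<^sub>R ?B \<in> ball x r" "x + 0 *\<^sub>R ?A + \<tau> *\<^sub>R ?B \<in> ball x r"
      using in_ball[of s \<tau>] in_ball[of 0 \<tau>] \<tau> by simp_all
    then have "pd_exists b h (x + s *\<^sub>R ?A + \<tau> *\<^sub>R ?B)" "pd_exists b h (x + \<tau> *\<^sub>R ?B)"
      using pd by auto
    then show "((\<lambda>\<tau>. h (x + s *\<^sub>R ?A + \<tau> *\<^sub>R ?B) - h (x + \<tau> *\<^sub>R ?B) - of_real \<tau> * (of_real s * c))
        has_vector_derivative pd b h (x + s *\<^sub>R ?A + \<tau> *\<^sub>R ?B) - pd b h (x + \<tau> *\<^sub>R ?B) - of_real s * c) (at \<tau>)"
      by (auto intro!: derivative_eq_intros pd_has_vector_derivative_along_line)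
    show "norm (pd b h (x + s *\<^sub>R ?A + \<tau> *\<^sub>R ?B) - pd b h (x + \<tau> *\<^sub>R ?B) - of_real s * c) \<le> e * \<bar>s\<bar>"
      by (rule inner[OF \<tau>])
  qed
  then show ?thesis by (simp add: algebra_simps)
qed

text \<open>Schwarz's theorem, in the form needed here: only the mixed derivative taken in the
  order b, then a, is assumed to exist and to be continuous. Dividing the mixed second difference
  by s and letting s tend to 0 turns its bound into a bound on the t-increment of pd a h.\<close>
lemma pd_commute:
  fixes h :: "(real,'n::finite) vec \<Rightarrow> complex"
  assumes U: "open U" "x \<in> U"
    and ea: "\<And>y. y \<in> U \<Longrightarrow> pd_exists a h y" and eb: "\<And>y. y \<in> U \<Longrightarrow> pd_exists b h y"
    and eab: "\<And>y. y \<in> U \<Longrightarrow> pd_exists a (pd b h) y"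
    and cont: "continuous_on U (pd a (pd b h))"
  shows "pd_exists b (pd a h) x \<and> pd b (pd a h) x = pd a (pd b h) x"
proof (rule pd_eqI)
  let ?A = "axis a 1 :: (real,'n) vec" and ?B = "axis b 1 :: (real,'n) vec"
  define c where "c = pd a (pd b h) x"
  have "\<exists>d>0. \<forall>t. norm (t - 0) < d \<longrightarrow>
      norm (pd a h (x + t *\<^sub>R ?B) - pd a h (x + 0 *\<^sub>R ?B) - (t - 0) *\<^sub>R c) \<le> e * norm (t - 0)"
    if "e > 0" for e
  proof -
    obtain r where r: "r > 0" "ball x r \<subseteq> U"
      and close: "\<And>y. y \<in> ball x r \<Longrightarrow> dist (pd a (pd b h) y) c \<le> e"
      using open_continuous_on_ball[OF U cont \<open>e > 0\<close>] unfolding c_def by blast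
    have pd: "pd_exists b h y \<and> pd_exists a (pd b h) y \<and> norm (pd a (pd b h) y - c) \<le> e"
      if "y \<in> ball x r" for y
      using that r(2) eb eab close[OF that] by (auto simp: dist_norm)
    show ?thesis
    proof (intro exI[of _ "r/2"] conjI allI impI)
      fix t :: real assume "norm (t - 0) < r/2"
      then have t: "\<bar>t\<bar> < r/2" by simp
      have "x + t *\<^sub>R ?B \<in> ball x r" using t by (simp add: dist_norm)
      then have "pd_exists a h (x + t *\<^sub>R ?B)" using r(2) ea by blast
      then have "((\<lambda>s. h (x + t *\<^sub>R ?B + s *\<^sub>R ?A) - h (x + s *\<^sub>R ?A)) has_vector_derivative
          pd a h (x + t *\<^sub>R ?B) - pd a h x) (at 0)"
        using ea[OF U(2)] by (intro has_vector_derivative_diff pd_has_vector_derivative)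
      then have "norm (pd a h (x + t *\<^sub>R ?B) - pd a h x - t *\<^sub>R c) \<le> e * \<bar>t\<bar>"
      proof (rule norm_has_vector_derivative_le[where d="r/2"])
        fix s :: real assume "\<bar>s\<bar> < r/2"
        then have "\<bar>s\<bar> + \<bar>t\<bar> < r" using t by simp
        from mixed_second_difference_bound[OF pd this]
        show "norm (h (x + t *\<^sub>R ?B + s *\<^sub>R ?A) - h (x + s *\<^sub>R ?A) - (h (x + t *\<^sub>R ?B + 0 *\<^sub>R ?A) - h (x + 0 *\<^sub>R ?A))
            - s *\<^sub>R (t *\<^sub>R c)) \<le> e * \<bar>t\<bar> * \<bar>s\<bar>"
          by (simp add: algebra_simps scaleR_conv_of_real)
      qed (use r in simp)
      then show "norm (pd a h (x + t *\<^sub>R ?B) - pd a h (x + 0 *\<^sub>R ?B) - (t - 0) *\<^sub>R c) \<le> e * norm (t - 0)"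
        by simp
    qed (use r in simp)
  qed
  then show "((\<lambda>t. pd a h (x + t *\<^sub>R ?B)) has_vector_derivative pd a (pd b h) x) (at 0)"
    unfolding has_vector_derivative_def has_derivative_at_alt c_def
    by (auto intro: bounded_linear_scaleR_left)
qed

lemma mlist_fun_upd_Suc:
  fixes \<beta> :: "'n::{finite,linorder} \<Rightarrow> nat"
  assumes "\<And>l. l < j \<Longrightarrow> \<beta> l = 0"
  shows "mlist (\<beta>(j := Suc (\<beta> j))) = j # mlist \<beta>"
proof -
  define L where "L = sorted_list_of_set (UNIV::'n set)"
  define \<beta>' where "\<beta>' = \<beta>(j := Suc (\<beta> j))"
  have "j \<in> set L" unfolding L_def by simp
  then obtain L1 L2 where L: "L = L1 @ j # L2" by (meson split_list)
  have "sorted_wrt (<) L" "distinct L"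
    unfolding L_def by (simp_all add: strict_sorted_list_of_set)
  then have L1: "\<And>l. l \<in> set L1 \<Longrightarrow> l < j" and "j \<notin> set L1" "j \<notin> set L2"
    unfolding L by (auto simp: sorted_wrt_append)
  have L1_empty: "concat (map (\<lambda>i. replicate (\<beta> i) i) L1) = []"
    "concat (map (\<lambda>i. replicate (\<beta>' i) i) L1) = []"
    using L1 assms \<open>j \<notin> set L1\<close> unfolding \<beta>'_def by (induction L1) auto
  have L2_same: "map (\<lambda>i. replicate (\<beta>' i) i) L2 = map (\<lambda>i. replicate (\<beta> i) i) L2"
    using \<open>j \<notin> set L2\<close> unfolding \<beta>'_def by (intro map_cong) auto
  have "\<beta>' j = Suc (\<beta> j)" unfolding \<beta>'_def by simp
  then have "mlist \<beta>' = j # mlist \<beta>"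
    unfolding mlist_def L_def[symmetric] L by (simp add: L1_empty L2_same)
  then show ?thesis unfolding \<beta>'_def .
qed

lemma mlist_zero: "mlist (\<lambda>_. 0) = []"
  unfolding mlist_def by (induction "sorted_list_of_set (UNIV::'a set)") auto

lemma length_mlist: "length (mlist \<beta>) = (\<Sum>l\<in>UNIV. \<beta> l)"
  unfolding mlist_def length_concat by (simp add: o_def sum_list_distinct_conv_sum_set)

lemma sum_fun_upd_Suc:
  fixes \<alpha> :: "'n::finite \<Rightarrow> nat"
  shows "(\<Sum>l\<in>UNIV. (\<alpha>(i := Suc (\<alpha> i))) l) = Suc (\<Sum>l\<in>UNIV. \<alpha> l)"
  by (simp add: sum.remove[of UNIV i] sum.cong[of "UNIV - {i}" _ "\<alpha>(i := Suc (\<alpha> i))" \<alpha>])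

lemma finite_multi_idx: "finite (multi_idx k :: ('n::finite \<Rightarrow> nat) set)"
proof (rule finite_subset)
  show "multi_idx k \<subseteq> (PiE UNIV (\<lambda>_. {0..k}) :: ('n \<Rightarrow> nat) set)"
    unfolding multi_idx_def
    by (auto simp: PiE_UNIV_domain) (metis UNIV_I finite member_le_sum order_trans zero_le)
qed (auto intro: finite_PiE)

lemma mlist_Min_support:
  fixes \<alpha> :: "'n::{finite,linorder} \<Rightarrow> nat"
  assumes "\<alpha> m \<noteq> 0"
  obtains j \<alpha>' where "\<alpha> = \<alpha>'(j := Suc (\<alpha>' j))" "mlist \<alpha> = j # mlist \<alpha>'" "j \<le> m"
    "\<And>l. l < j \<Longrightarrow> \<alpha>' l = 0"
proof -
  define j where "j = Min {l. \<alpha> l \<noteq> 0}"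
  define \<alpha>' where "\<alpha>' = \<alpha>(j := \<alpha> j - 1)"
  have "\<alpha> j \<noteq> 0" "j \<le> m" using assms Min_in[of "{l. \<alpha> l \<noteq> 0}"] by (auto simp: j_def)
  moreover have "\<alpha> l = 0" if "l < j" for l
  proof (rule ccontr)
    assume "\<alpha> l \<noteq> 0"
    then have "j \<le> l" unfolding j_def by (intro Min_le) auto
    with that show False by simp
  qed
  ultimately have "\<alpha> = \<alpha>'(j := Suc (\<alpha>' j))" "\<And>l. l < j \<Longrightarrow> \<alpha>' l = 0"
    by (auto simp: \<alpha>'_def fun_eq_iff)
  with \<open>j \<le> m\<close> show ?thesis using mlist_fun_upd_Suc that by metis
qed

context
  fixes g :: "(real,'n::{finite,linorder}) vec \<Rightarrow> complex" and U k
  assumes U: "open U"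
    and H: "\<And>\<beta>. \<beta> \<in> multi_idx k \<Longrightarrow> Dpart_exists U \<beta> g \<and> continuous_on U (Dpart \<beta> g)"
begin

lemma Dpart_fun_upd_Suc_pd:
  assumes "mlist (\<alpha>(i := Suc (\<alpha> i))) = i # mlist \<alpha>" "\<alpha>(i := Suc (\<alpha> i)) \<in> multi_idx k" "x \<in> U"
  shows "pd_exists i (Dpart \<alpha> g) x \<and> pd i (Dpart \<alpha> g) x = Dpart (\<alpha>(i := Suc (\<alpha> i))) g x"
  using H[OF assms(2)] assms(3) unfolding Dpart_exists_def Dpart_def assms(1) by simp

text \<open>If a direction j < i occurs in \<alpha>, the smallest such j is moved to the front by
  Schwarz's theorem and the induction hypothesis; otherwise i is already in its sorted position
  in the direction list of \<alpha> + e_i.\<close>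
lemma pd_Dpart:
  "(\<Sum>l\<in>UNIV. \<alpha> l) < k \<Longrightarrow> x \<in> U \<Longrightarrow>
     pd_exists i (Dpart \<alpha> g) x \<and> pd i (Dpart \<alpha> g) x = Dpart (\<alpha>(i := Suc (\<alpha> i))) g x"
proof (induction "\<Sum>l\<in>UNIV. \<alpha> l" arbitrary: \<alpha> i x rule: less_induct)
  case less
  define \<delta> where "\<delta> = \<alpha>(i := Suc (\<alpha> i))"
  have \<delta>: "\<delta> \<in> multi_idx k"
    using less.prems(1) sum_fun_upd_Suc[of \<alpha> i] by (simp add: multi_idx_def \<delta>_def)
  show ?case
  proof (cases "\<forall>l<i. \<alpha> l = 0")
    case True
    then show ?thesis
      using Dpart_fun_upd_Suc_pd[OF mlist_fun_upd_Suc \<delta>[unfolded \<delta>_def] less.prems(2)] by blast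
  next
    case False
    then obtain l0 where l0: "l0 < i" "\<alpha> l0 \<noteq> 0" by blast
    obtain j \<alpha>' where \<alpha>: "\<alpha> = \<alpha>'(j := Suc (\<alpha>' j))" and ml\<alpha>: "mlist \<alpha> = j # mlist \<alpha>'"
      and "j \<le> l0" and below_j: "\<And>l. l < j \<Longrightarrow> \<alpha>' l = 0"
      using mlist_Min_support[where \<alpha>=\<alpha> and m=l0] l0(2) by blast
    with l0 have "j < i" by simp
    define h where "h = Dpart \<alpha>' g"
    define \<gamma> where "\<gamma> = \<alpha>'(i := Suc (\<alpha>' i))"
    have sum\<alpha>': "(\<Sum>l\<in>UNIV. \<alpha>' l) < (\<Sum>l\<in>UNIV. \<alpha> l)"
      using sum_fun_upd_Suc[of \<alpha>' j] \<alpha> by simp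
    have \<alpha>_in: "\<alpha> \<in> multi_idx k" using less.prems(1) by (simp add: multi_idx_def)
    have Dpart_\<alpha>: "Dpart \<alpha> g = pd j h" unfolding Dpart_def h_def ml\<alpha> by simp
    have pd_i_h: "pd_exists i h y \<and> pd i h y = Dpart \<gamma> g y" if "y \<in> U" for y
      unfolding h_def \<gamma>_def using sum\<alpha>' less.prems(1) that by (intro less.hyps) simp_all
    have "\<delta> = \<gamma>(j := Suc (\<gamma> j))" "\<And>l. l < j \<Longrightarrow> \<gamma> l = 0"
      using \<alpha> \<open>j < i\<close> below_j by (auto simp: \<delta>_def \<gamma>_def fun_eq_iff)
    then have Dpart_\<delta>: "pd_exists j (Dpart \<gamma> g) y \<and> pd j (Dpart \<gamma> g) y = Dpart \<delta> g y" if "y \<in> U" for y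
      using Dpart_fun_upd_Suc_pd[where \<alpha>=\<gamma> and i=j, OF mlist_fun_upd_Suc _ that] \<delta> by simp
    have pd_j_pd_i_h: "pd_exists j (pd i h) y \<and> pd j (pd i h) y = Dpart \<delta> g y" if "y \<in> U" for y
      using pd_cong_open[OF U that, of "pd i h" "Dpart \<gamma> g" j] pd_i_h Dpart_\<delta>[OF that] by auto
    have ea: "pd_exists j h y" if "y \<in> U" for y
      using H[OF \<alpha>_in] that unfolding Dpart_exists_def ml\<alpha> h_def Dpart_def by simp
    have cont: "continuous_on U (pd j (pd i h))"
      using continuous_on_cong[OF refl, of U "pd j (pd i h)" "Dpart \<delta> g"] pd_j_pd_i_h H[OF \<delta>] by simp
    have "pd_exists i (pd j h) x \<and> pd i (pd j h) x = pd j (pd i h) x"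
      by (rule pd_commute[OF U less.prems(2) ea _ _ cont]) (use pd_i_h pd_j_pd_i_h in auto)
    then show ?thesis using pd_j_pd_i_h[OF less.prems(2)] unfolding Dpart_\<alpha> \<delta>_def by simp
  qed
qed

lemma dlist_eq_Dpart:
  "length s \<le> k \<Longrightarrow> dlist_ok U s g \<and> (\<exists>\<alpha>. (\<Sum>l\<in>UNIV. \<alpha> l) = length s \<and> (\<forall>x\<in>U. dlist s g x = Dpart \<alpha> g x))"
proof (induction s)
  case Nil
  show ?case by (intro conjI exI[of _ "\<lambda>_. 0"]) (auto simp: Dpart_def mlist_zero)
next
  case (Cons i s)
  then have "length s \<le> k" by simp
  then obtain \<alpha> where ok: "dlist_ok U s g" and len: "(\<Sum>l\<in>UNIV. \<alpha> l) = length s"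
    and eq: "\<And>x. x \<in> U \<Longrightarrow> dlist s g x = Dpart \<alpha> g x" using Cons.IH by blast
  have pd: "pd_exists i (dlist s g) x \<and> pd i (dlist s g) x = Dpart (\<alpha>(i := Suc (\<alpha> i))) g x" if "x \<in> U" for x
    using pd_Dpart[of \<alpha> x i] pd_cong_open[OF U that eq, where i=i] len Cons.prems that by simp
  show ?case
  proof (intro conjI exI[of _ "\<alpha>(i := Suc (\<alpha> i))"])
    show "dlist_ok U (i # s) g" using ok pd by simp
    show "(\<Sum>l\<in>UNIV. (\<alpha>(i := Suc (\<alpha> i))) l) = length (i # s)" using len sum_fun_upd_Suc[of \<alpha> i] by simp
    show "\<forall>x\<in>U. dlist (i # s) g x = Dpart (\<alpha>(i := Suc (\<alpha> i))) g x" using pd by simp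
  qed
qed

lemma continuous_on_dlist:
  assumes "length s \<le> k"
  shows "continuous_on U (dlist s g)"
proof -
  obtain \<alpha> where len: "(\<Sum>l\<in>UNIV. \<alpha> l) = length s" and eq: "\<And>x. x \<in> U \<Longrightarrow> dlist s g x = Dpart \<alpha> g x"
    using dlist_eq_Dpart[OF assms] by blast
  have "\<alpha> \<in> multi_idx k" using len assms by (simp add: multi_idx_def)
  then have "continuous_on U (Dpart \<alpha> g)" using H by blast
  then show ?thesis by (rule continuous_on_eq) (simp add: eq)
qed

lemma has_derivative_dlist:
  assumes "length s < k" "x \<in> U"
  shows "(dlist s g has_derivative (\<lambda>v. \<Sum>i\<in>UNIV. of_real (v$i) * dlist (i # s) g x)) (at x)"
proof -
  have len: "length (i # s) \<le> k" for i using assms(1) by simp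
  have "(dlist s g has_derivative (\<lambda>v. \<Sum>i\<in>UNIV. of_real (v$i) * pd i (dlist s g) x)) (at x)"
  proof (rule has_derivative_of_continuous_pd[OF U assms(2)])
    fix y i assume "y \<in> U"
    moreover have "dlist_ok U (i # s) g" using dlist_eq_Dpart[OF len] by blast
    ultimately show "pd_exists i (dlist s g) y" by simp
  next
    fix i
    show "continuous_on U (pd i (dlist s g))" using continuous_on_dlist[OF len] by simp
  qed
  then show ?thesis by simp
qed

lemma norm_dlist_le:
  assumes "length s \<le> k" "x \<in> S" "S \<subseteq> U"
    and bdd: "\<And>\<beta>. \<beta> \<in> multi_idx k \<Longrightarrow> bounded (Dpart \<beta> g ` U)"
  shows "cmod (dlist s g x) \<le> (\<Sum>\<beta>\<in>multi_idx k. (SUP y\<in>S. cmod (Dpart \<beta> g y)))"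
proof -
  obtain \<alpha> where len: "(\<Sum>l\<in>UNIV. \<alpha> l) = length s" and eq: "\<And>x. x \<in> U \<Longrightarrow> dlist s g x = Dpart \<alpha> g x"
    using dlist_eq_Dpart[OF assms(1)] by blast
  have \<alpha>: "\<alpha> \<in> multi_idx k" using len assms(1) by (simp add: multi_idx_def)
  have bdd_S: "bdd_above ((\<lambda>y. cmod (Dpart \<beta> g y)) ` S)" if \<beta>: "\<beta> \<in> multi_idx k" for \<beta>
  proof -
    obtain M where "\<And>y. y \<in> U \<Longrightarrow> cmod (Dpart \<beta> g y) \<le> M"
      using bdd[OF \<beta>] unfolding bounded_iff by blast
    then show ?thesis using assms(3) by (intro bdd_aboveI2[where M=M]) auto
  qed
  have "x \<in> U" using assms(2,3) by blast
  then have "cmod (dlist s g x) = cmod (Dpart \<alpha> g x)" by (simp add: eq)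
  also have "\<dots> \<le> (SUP y\<in>S. cmod (Dpart \<alpha> g y))" by (rule cSUP_upper[OF assms(2) bdd_S[OF \<alpha>]])
  also have "\<dots> \<le> (\<Sum>\<beta>\<in>multi_idx k. (SUP y\<in>S. cmod (Dpart \<beta> g y)))"
  proof (rule member_le_sum[OF \<alpha> _ finite_multi_idx])
    fix \<beta> assume "\<beta> \<in> multi_idx k - {\<alpha>}"
    then have "\<beta> \<in> multi_idx k" by simp
    show "0 \<le> (SUP y\<in>S. cmod (Dpart \<beta> g y))"
      by (rule cSUP_upper2[OF bdd_S[OF \<open>\<beta> \<in> multi_idx k\<close>] assms(2)]) simp
  qed
  finally show ?thesis .
qed

end

section \<open>Partial derivatives of the DFS function\<close>

text \<open>A factor (b, m, n) encodes [b] * w m (\<lambda>) * w n (\<theta>), where w None = 1 and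
  w (Some n) = sin (_ + n\<pi>/2) is the n-th derivative of sin. Differentiating a factor replaces
  Some n by Some (n+1) and annihilates a constant w None, which clears the flag b.\<close>

fun wave :: "nat option \<Rightarrow> real \<Rightarrow> real" where
  "wave None x = 1"
| "wave (Some n) x = sin (x + real n * pi / 2)"

type_synonym factor = "bool \<times> nat option \<times> nat option"

definition factor_val :: "factor \<Rightarrow> real^2 \<Rightarrow> real" where
  "factor_val a p = (if fst a then 1 else 0) * wave (fst (snd a)) (p$1) * wave (snd (snd a)) (p$2)"

definition factor_pd :: "2 \<Rightarrow> factor \<Rightarrow> factor" where
  "factor_pd j a = (if j = 1 then (fst a \<and> fst (snd a) \<noteq> None, map_option Suc (fst (snd a)), snd (snd a))
                else (fst a \<and> snd (snd a) \<noteq> None, fst (snd a), map_option Suc (snd (snd a))))"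

lemma has_real_derivative_wave:
  "((\<lambda>t. wave ww (x + t)) has_real_derivative ((if ww = None then 0 else 1) * wave (map_option Suc ww) x)) (at 0)"
proof (cases ww)
  case None
  then show ?thesis by simp
next
  case (Some n)
  have "((\<lambda>t. sin (x + t + real n * pi / 2)) has_real_derivative cos (x + 0 + real n * pi / 2)) (at 0)"
    by (auto intro!: derivative_eq_intros)
  moreover have "cos (x + 0 + real n * pi / 2) = sin (x + real (Suc n) * pi / 2)"
  proof -
    have c: "sin (y + pi / 2) = cos y" for y by (simp add: sin_add)
    have "x + real (Suc n) * pi / 2 = (x + real n * pi / 2) + pi / 2" by (simp add: algebra_simps add_divide_distrib)
    then have "sin (x + real (Suc n) * pi / 2) = sin ((x + real n * pi / 2) + pi / 2)" by (simp only:)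
    also have "\<dots> = cos (x + real n * pi / 2)" by (rule c)
    finally show ?thesis by simp
  qed
  ultimately show ?thesis using Some by simp
qed

lemma abs_wave_le_1: "\<bar>wave ww x\<bar> \<le> 1"
  by (cases ww) auto

lemma abs_factor_val_le_1: "\<bar>factor_val a p\<bar> \<le> 1"
  unfolding factor_val_def using abs_wave_le_1[of "fst (snd a)" "p$1"] abs_wave_le_1[of "snd (snd a)" "p$2"]
  by (auto simp: abs_mult intro: mult_le_one)

lemma axis_2_nth: "(axis (1::2) (1::real)) $ 1 = 1" "(axis (1::2) (1::real)) $ 2 = 0"
    "(axis (2::2) (1::real)) $ 1 = 0" "(axis (2::2) (1::real)) $ 2 = 1"
  by (simp_all add: axis_def)

lemma has_real_derivative_factor_val:
  "((\<lambda>t. factor_val a (p + t *\<^sub>R axis j 1)) has_real_derivative factor_val (factor_pd j a) p) (at 0)"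
proof -
  obtain b o1 o2 where a: "a = (b, o1, o2)" by (cases a) auto
  consider "j = 1" | "j = 2" using exhaust_2 by blast
  then show ?thesis
  proof cases
    case 1
    have "((\<lambda>t. (if b then 1 else 0) * wave o1 (p$1 + t) * wave o2 (p$2)) has_real_derivative
        (if b then 1 else 0) * ((if o1 = None then 0 else 1) * wave (map_option Suc o1) (p$1)) * wave o2 (p$2)) (at 0)"
      by (intro DERIV_cmult_right DERIV_cmult has_real_derivative_wave)
    moreover have "(\<lambda>t. factor_val a (p + t *\<^sub>R axis j 1)) = (\<lambda>t. (if b then 1 else 0) * wave o1 (p$1 + t) * wave o2 (p$2))"
      by (simp add: a 1 factor_val_def axis_2_nth)
    moreover have "factor_val (factor_pd j a) p = (if b then 1 else 0) * ((if o1 = None then 0 else 1) * wave (map_option Suc o1) (p$1)) * wave o2 (p$2)"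
      by (cases o1) (simp_all add: a 1 factor_val_def factor_pd_def)
    ultimately show ?thesis by simp
  next
    case 2
    have "((\<lambda>t. (if b then 1 else 0) * wave o1 (p$1) * wave o2 (p$2 + t)) has_real_derivative
        (if b then 1 else 0) * wave o1 (p$1) * ((if o2 = None then 0 else 1) * wave (map_option Suc o2) (p$2))) (at 0)"
      by (intro DERIV_cmult has_real_derivative_wave)
    moreover have "(\<lambda>t. factor_val a (p + t *\<^sub>R axis j 1)) = (\<lambda>t. (if b then 1 else 0) * wave o1 (p$1) * wave o2 (p$2 + t))"
      by (simp add: a 2 factor_val_def axis_2_nth)
    moreover have "factor_val (factor_pd j a) p = (if b then 1 else 0) * wave o1 (p$1) * ((if o2 = None then 0 else 1) * wave (map_option Suc o2) (p$2))"
      by (cases o2) (simp_all add: a 2 factor_val_def factor_pd_def)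
    ultimately show ?thesis by simp
  qed
qed

definition dfs_phi_factor :: "3 \<Rightarrow> factor" where
  "dfs_phi_factor i = (if i = 1 then (True, Some 1, Some 0) else if i = 2 then (True, Some 0, Some 0) else (True, None, Some 1))"

lemma factor_val_dfs_phi_factor: "factor_val (dfs_phi_factor i) p = dfs_phi p $ i"
proof -
  have c: "sin (y + pi / 2) = cos y" for y by (simp add: sin_add)
  consider "i = 1" | "i = 2" | "i = 3" using exhaust_3 by blast
  then show ?thesis by cases (simp_all add: dfs_phi_factor_def factor_val_def dfs_phi_def c)
qed

lemma dfs_phi_eq_sum_factors: "dfs_phi q = (\<Sum>i\<in>UNIV. factor_val (dfs_phi_factor i) q *\<^sub>R (axis i 1 :: real^3))"
  using basis_expansion[of "dfs_phi q"] by (simp add: factor_val_dfs_phi_factor scalar_mult_eq_scaleR)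

lemma has_vector_derivative_dfs_phi:
  "((\<lambda>t. dfs_phi (p + t *\<^sub>R axis j 1)) has_vector_derivative
     (\<Sum>i\<in>UNIV. factor_val (factor_pd j (dfs_phi_factor i)) p *\<^sub>R (axis i 1 :: real^3))) (at 0)"
proof -
  have "((\<lambda>t. \<Sum>i\<in>UNIV. factor_val (dfs_phi_factor i) (p + t *\<^sub>R axis j 1) *\<^sub>R (axis i 1 :: real^3)) has_vector_derivative
     (\<Sum>i\<in>UNIV. factor_val (factor_pd j (dfs_phi_factor i)) p *\<^sub>R (axis i 1 :: real^3))) (at 0)"
  proof (rule has_vector_derivative_sum)
    fix i :: 3
    have "((\<lambda>t. factor_val (dfs_phi_factor i) (p + t *\<^sub>R axis j 1) *\<^sub>R (axis i 1 :: real^3)) has_vector_derivative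
      (factor_val (dfs_phi_factor i) (p + 0 *\<^sub>R axis j 1) *\<^sub>R 0 + factor_val (factor_pd j (dfs_phi_factor i)) p *\<^sub>R (axis i 1 :: real^3))) (at 0)"
      by (rule has_vector_derivative_scaleR[OF has_real_derivative_factor_val has_vector_derivative_const])
    then show "((\<lambda>t. factor_val (dfs_phi_factor i) (p + t *\<^sub>R axis j 1) *\<^sub>R (axis i 1 :: real^3)) has_vector_derivative
      factor_val (factor_pd j (dfs_phi_factor i)) p *\<^sub>R (axis i 1 :: real^3)) (at 0)" by simp
  qed
  then show ?thesis by (simp only: dfs_phi_eq_sum_factors[symmetric])
qed

lemma has_vector_derivative_comp_dfs_phi:
  fixes F :: "real^3 \<Rightarrow> complex"
  assumes "(F has_derivative (\<lambda>v. \<Sum>i\<in>UNIV. of_real (v$i) * c i)) (at (dfs_phi p))"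
  shows "((\<lambda>t. F (dfs_phi (p + t *\<^sub>R axis j 1))) has_vector_derivative
          (\<Sum>i\<in>UNIV. of_real (factor_val (factor_pd j (dfs_phi_factor i)) p) * c i)) (at 0)"
proof -
  define V where "V = (\<Sum>i\<in>UNIV. factor_val (factor_pd j (dfs_phi_factor i)) p *\<^sub>R (axis i 1 :: real^3))"
  have V: "V $ i = factor_val (factor_pd j (dfs_phi_factor i)) p" for i
    unfolding V_def by (simp add: axis_def if_distrib cong: if_cong)
  have d1: "((\<lambda>t. dfs_phi (p + t *\<^sub>R axis j 1)) has_derivative (\<lambda>t. t *\<^sub>R V)) (at 0)"
    using has_vector_derivative_dfs_phi unfolding V_def has_vector_derivative_def .
  have d2: "(F has_derivative (\<lambda>v. \<Sum>i\<in>UNIV. of_real (v$i) * c i)) (at ((\<lambda>t. dfs_phi (p + t *\<^sub>R axis j 1)) 0))"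
    using assms by simp
  have "((F \<circ> (\<lambda>t. dfs_phi (p + t *\<^sub>R axis j 1))) has_derivative
        ((\<lambda>v. \<Sum>i\<in>UNIV. of_real (v$i) * c i) \<circ> (\<lambda>t. t *\<^sub>R V))) (at 0)"
    by (rule diff_chain_at[OF d1 d2])
  moreover have "((\<lambda>v. \<Sum>i\<in>UNIV. of_real (v$i) * c i) \<circ> (\<lambda>t. t *\<^sub>R V)) =
      (\<lambda>t. t *\<^sub>R (\<Sum>i\<in>UNIV. of_real (factor_val (factor_pd j (dfs_phi_factor i)) p) * c i))"
  proof (rule ext)
    fix t :: real
    have h: "complex_of_real (t * a) * b = t *\<^sub>R (complex_of_real a * b)" for a b
      by (simp add: scaleR_conv_of_real)
    show "((\<lambda>v. \<Sum>i\<in>UNIV. of_real (v$i) * c i) \<circ> (\<lambda>t. t *\<^sub>R V)) t =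
      t *\<^sub>R (\<Sum>i\<in>UNIV. of_real (factor_val (factor_pd j (dfs_phi_factor i)) p) * c i)"
      by (simp add: V scaleR_sum_right h del: of_real_mult)
  qed
  ultimately show ?thesis unfolding has_vector_derivative_def by (simp add: o_def)
qed

definition factors_prod :: "factor list \<Rightarrow> real^2 \<Rightarrow> real" where
  "factors_prod fs p = prod_list (map (\<lambda>a. factor_val a p) fs)"

fun product_rule :: "2 \<Rightarrow> factor list \<Rightarrow> factor list list" where
  "product_rule j [] = []"
| "product_rule j (a # fs) = (factor_pd j a # fs) # map ((#) a) (product_rule j fs)"

lemma length_product_rule: "length (product_rule j fs) = length fs"
  by (induction fs) auto

lemma has_real_derivative_factors_prod:
  "((\<lambda>t. factors_prod fs (p + t *\<^sub>R axis j 1)) has_real_derivative (\<Sum>fs'\<leftarrow>product_rule j fs. factors_prod fs' p)) (at 0)"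
proof (induction fs)
  case Nil
  then show ?case by (simp add: factors_prod_def)
next
  case (Cons a fs)
  have "((\<lambda>t. factor_val a (p + t *\<^sub>R axis j 1) * factors_prod fs (p + t *\<^sub>R axis j 1)) has_real_derivative
      factor_val (factor_pd j a) p * factors_prod fs (p + 0 *\<^sub>R axis j 1) + (\<Sum>fs'\<leftarrow>product_rule j fs. factors_prod fs' p) * factor_val a (p + 0 *\<^sub>R axis j 1)) (at 0)"
    by (rule DERIV_mult[OF has_real_derivative_factor_val Cons.IH])
  moreover have "(\<Sum>fs'\<leftarrow>product_rule j (a # fs). factors_prod fs' p) =
      factor_val (factor_pd j a) p * factors_prod fs p + (\<Sum>fs'\<leftarrow>product_rule j fs. factors_prod fs' p) * factor_val a p"
    by (simp add: factors_prod_def o_def sum_list_const_mult algebra_simps)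
  ultimately show ?case by (simp add: factors_prod_def)
qed

lemma abs_factors_prod_le_1: "\<bar>factors_prod fs p\<bar> \<le> 1"
  unfolding factors_prod_def
proof (induction fs)
  case (Cons a fs)
  then show ?case using abs_factor_val_le_1[of a p] by (simp add: abs_mult mult_le_one)
qed simp

lemma continuous_on_factor_val: "continuous_on UNIV (factor_val a)"
proof -
  have w: "continuous_on UNIV (\<lambda>x. wave ww x)" for ww by (cases ww) (auto intro!: continuous_intros)
  show ?thesis unfolding factor_val_def
    by (intro continuous_intros continuous_on_compose2[OF w] linear_continuous_on bounded_linear_vec_nth) auto
qed

lemma continuous_on_factors_prod: "continuous_on UNIV (factors_prod fs)"
  unfolding factors_prod_def by (induction fs) (auto intro!: continuous_intros continuous_on_factor_val)

text \<open>A term (fs, s) stands for the product of the factors fs times (dlist s g) \<circ> dfs_phi.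
  By the product and chain rules, the partial derivative of a term is the sum of the
  length fs + 3 terms in term_pd.\<close>

type_synonym dfs_term = "factor list \<times> 3 list"

definition term_val :: "(real^3 \<Rightarrow> complex) \<Rightarrow> dfs_term \<Rightarrow> real^2 \<Rightarrow> complex" where
  "term_val g t p = of_real (factors_prod (fst t) p) * dlist (snd t) g (dfs_phi p)"

definition term_pd :: "2 \<Rightarrow> dfs_term \<Rightarrow> dfs_term list" where
  "term_pd j t = map (\<lambda>fs'. (fs', snd t)) (product_rule j (fst t)) @ map (\<lambda>i. (factor_pd j (dfs_phi_factor i) # fst t, i # snd t)) [1,2,3]"

fun dfs_terms :: "2 list \<Rightarrow> dfs_term list" where
  "dfs_terms [] = [([], [])]"
| "dfs_terms (j # l) = concat (map (term_pd j) (dfs_terms l))"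

definition terms_val :: "(real^3 \<Rightarrow> complex) \<Rightarrow> dfs_term list \<Rightarrow> real^2 \<Rightarrow> complex" where
  "terms_val g ts p = (\<Sum>t\<leftarrow>ts. term_val g t p)"

lemma sum_list_of_real_mult:
  "(\<Sum>x\<leftarrow>L. of_real (f x) * D) = of_real (\<Sum>x\<leftarrow>L. f x) * (D::'a::real_algebra_1)"
  by (induction L) (auto simp: algebra_simps)

lemma sum_list_concat_map: "(\<Sum>t\<leftarrow>concat (map h L). f t) = (\<Sum>t\<leftarrow>L. \<Sum>t'\<leftarrow>h t. f t')"
  by (induction L) auto

lemma has_vector_derivative_sum_list:
  assumes "\<And>t. t \<in> set L \<Longrightarrow> ((\<lambda>\<tau>. F t \<tau>) has_vector_derivative D t) net"
  shows "((\<lambda>\<tau>. \<Sum>t\<leftarrow>L. F t \<tau>) has_vector_derivative (\<Sum>t\<leftarrow>L. D t)) net"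
  using assms
proof (induction L)
  case Nil
  then show ?case by (simp add: has_vector_derivative_const)
next
  case (Cons a L)
  have "((\<lambda>\<tau>. F a \<tau> + (\<Sum>t\<leftarrow>L. F t \<tau>)) has_vector_derivative (D a + (\<Sum>t\<leftarrow>L. D t))) net"
    by (rule has_vector_derivative_add) (use Cons in auto)
  then show ?case by simp
qed

lemma norm_sum_list_le:
  fixes f :: "'a \<Rightarrow> 'b::real_normed_vector"
  assumes "\<And>t. t \<in> set L \<Longrightarrow> norm (f t) \<le> M"
  shows "norm (\<Sum>t\<leftarrow>L. f t) \<le> real (length L) * M"
  using assms
proof (induction L)
  case (Cons a L)
  have "norm (\<Sum>t\<leftarrow>a # L. f t) \<le> norm (f a) + norm (\<Sum>t\<leftarrow>L. f t)"
    by (simp add: norm_triangle_ineq)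
  also have "\<dots> \<le> M + real (length L) * M" using Cons by (intro add_mono) auto
  finally show ?case by (simp add: algebra_simps)
qed simp

lemma continuous_on_sum_list:
  fixes F :: "'a \<Rightarrow> 'c::topological_space \<Rightarrow> 'b::topological_monoid_add"
  assumes "\<And>t. t \<in> set L \<Longrightarrow> continuous_on S (F t)"
  shows "continuous_on S (\<lambda>p. \<Sum>t\<leftarrow>L. F t p)"
  using assms
proof (induction L)
  case (Cons a L)
  have "continuous_on S (\<lambda>p. F a p + (\<Sum>t\<leftarrow>L. F t p))"
    by (rule continuous_on_add) (use Cons in auto)
  then show ?case by simp
qed (simp add: continuous_on_const)

lemma length_product_rule_mem: "fs' \<in> set (product_rule j fs) \<Longrightarrow> length fs' = length fs"
  by (induction fs arbitrary: fs') auto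

lemma dfs_terms_length: "t \<in> set (dfs_terms l) \<Longrightarrow> length (snd t) \<le> length l \<and> length (fst t) = length (snd t)"
proof (induction l arbitrary: t)
  case Nil
  then show ?case by simp
next
  case (Cons j l)
  then obtain t0 where t0: "t0 \<in> set (dfs_terms l)" "t \<in> set (term_pd j t0)" by auto
  note IH = Cons.IH[OF t0(1)]
  from t0(2) show ?case unfolding term_pd_def using IH length_product_rule_mem by auto
qed

lemma length_term_pd: "length (term_pd j t) = length (fst t) + 3"
  by (simp add: term_pd_def length_product_rule)

lemma length_concat_map_le:
  assumes "\<And>t. t \<in> set L \<Longrightarrow> length (h t) \<le> M"
  shows "length (concat (map h L)) \<le> length L * M"
  using assms by (induction L) (auto simp: add_mono)

lemma length_dfs_terms_le: "2 * length (dfs_terms l) \<le> fact (length l + 2)"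
proof (induction l)
  case Nil
  then show ?case by (simp add: numeral_2_eq_2)
next
  case (Cons j l)
  have "length (dfs_terms (j # l)) \<le> length (dfs_terms l) * (length l + 3)"
    unfolding dfs_terms.simps
  proof (rule length_concat_map_le)
    fix t assume "t \<in> set (dfs_terms l)"
    then show "length (term_pd j t) \<le> length l + 3" using dfs_terms_length[of t l] by (simp add: length_term_pd)
  qed
  then have "2 * length (dfs_terms (j # l)) \<le> (2 * length (dfs_terms l)) * (length l + 3)" by simp
  also have "\<dots> \<le> fact (length l + 2) * (length l + 3)" using Cons.IH by (rule mult_right_mono) simp
  also have "\<dots> = fact (length (j # l) + 2)"
    by (simp add: fact_Suc algebra_simps)
  finally show ?case .
qed

lemma dfs_phi_in_S2: "dfs_phi p \<in> S2"
proof -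
  have e1: "(cos a)\<^sup>2 * (sin b)\<^sup>2 + (sin a)\<^sup>2 * (sin b)\<^sup>2 = (sin b)\<^sup>2" for a b :: real
  proof -
    have "(cos a)\<^sup>2 * (sin b)\<^sup>2 + (sin a)\<^sup>2 * (sin b)\<^sup>2 = ((cos a)\<^sup>2 + (sin a)\<^sup>2) * (sin b)\<^sup>2"
      by (simp only: distrib_right)
    then show ?thesis by simp
  qed
  have "(norm (dfs_phi p))\<^sup>2 = 1"
    by (simp add: norm_vec_def L2_set_def sum_3 dfs_phi_def power_mult_distrib e1)
  then have "norm (dfs_phi p) = 1 \<or> norm (dfs_phi p) = -1" by (simp only: power2_eq_1_iff)
  then have "norm (dfs_phi p) = 1" using norm_ge_zero[of "dfs_phi p"] by linarith
  then show ?thesis by simp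
qed

lemma continuous_on_dfs_phi: "continuous_on UNIV dfs_phi"
proof -
  have "continuous_on UNIV (\<lambda>q. \<Sum>i\<in>UNIV. factor_val (dfs_phi_factor i) q *\<^sub>R (axis i 1 :: real^3))"
    by (intro continuous_intros continuous_on_compose2[OF continuous_on_factor_val]) auto
  then show ?thesis by (simp only: dfs_phi_eq_sum_factors[symmetric])
qed

context
  fixes g :: "real^3 \<Rightarrow> complex" and U and k :: nat
  assumes U: "open U"
    and H: "\<And>\<beta>. \<beta> \<in> multi_idx k \<Longrightarrow> Dpart_exists U \<beta> g \<and> continuous_on U (Dpart \<beta> g)"
    and S2U: "S2 \<subseteq> U"
begin

lemma dfs_phi_in_U: "dfs_phi p \<in> U" using dfs_phi_in_S2 S2U by blast

lemma has_vector_derivative_term_val: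
  assumes "length (snd t) < k"
  shows "((\<lambda>\<tau>. term_val g t (p + \<tau> *\<^sub>R axis j 1)) has_vector_derivative (\<Sum>t'\<leftarrow>term_pd j t. term_val g t' p)) (at 0)"
proof -
  obtain fs s where t: "t = (fs, s)" by (cases t) auto
  have ls: "length s < k" using assms t by simp
  have d1: "((\<lambda>\<tau>. complex_of_real (factors_prod fs (p + \<tau> *\<^sub>R axis j 1))) has_vector_derivative
      of_real (\<Sum>fs'\<leftarrow>product_rule j fs. factors_prod fs' p)) (at 0)"
    by (rule has_vector_derivative_of_real[OF has_real_derivative_factors_prod])
  have d2: "((\<lambda>\<tau>. dlist s g (dfs_phi (p + \<tau> *\<^sub>R axis j 1))) has_vector_derivative
      (\<Sum>i\<in>UNIV. of_real (factor_val (factor_pd j (dfs_phi_factor i)) p) * dlist (i # s) g (dfs_phi p))) (at 0)"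
    by (rule has_vector_derivative_comp_dfs_phi[OF has_derivative_dlist[OF U H ls dfs_phi_in_U]])
  have "((\<lambda>\<tau>. complex_of_real (factors_prod fs (p + \<tau> *\<^sub>R axis j 1)) * dlist s g (dfs_phi (p + \<tau> *\<^sub>R axis j 1))) has_vector_derivative
      (complex_of_real (factors_prod fs (p + 0 *\<^sub>R axis j 1)) * (\<Sum>i\<in>UNIV. of_real (factor_val (factor_pd j (dfs_phi_factor i)) p) * dlist (i # s) g (dfs_phi p))
      + of_real (\<Sum>fs'\<leftarrow>product_rule j fs. factors_prod fs' p) * dlist s g (dfs_phi (p + 0 *\<^sub>R axis j 1)))) (at 0)"
    by (rule has_vector_derivative_mult[OF d1 d2])
  moreover have "(\<Sum>t'\<leftarrow>term_pd j t. term_val g t' p) =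
      complex_of_real (factors_prod fs p) * (\<Sum>i\<in>UNIV. of_real (factor_val (factor_pd j (dfs_phi_factor i)) p) * dlist (i # s) g (dfs_phi p))
      + of_real (\<Sum>fs'\<leftarrow>product_rule j fs. factors_prod fs' p) * dlist s g (dfs_phi p)"
  proof -
    have "(\<Sum>t'\<leftarrow>term_pd j t. term_val g t' p) = (\<Sum>fs'\<leftarrow>product_rule j fs. of_real (factors_prod fs' p) * dlist s g (dfs_phi p))
       + (\<Sum>i\<leftarrow>[1,2,3]. of_real (factors_prod (factor_pd j (dfs_phi_factor i) # fs) p) * dlist (i # s) g (dfs_phi p))"
      unfolding term_pd_def t by (simp add: term_val_def o_def)
    also have "(\<Sum>fs'\<leftarrow>product_rule j fs. of_real (factors_prod fs' p) * dlist s g (dfs_phi p)) =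
        of_real (\<Sum>fs'\<leftarrow>product_rule j fs. factors_prod fs' p) * dlist s g (dfs_phi p)"
      by (rule sum_list_of_real_mult)
    also have "(\<Sum>i\<leftarrow>[1,2,3]. of_real (factors_prod (factor_pd j (dfs_phi_factor i) # fs) p) * dlist (i # s) g (dfs_phi p)) =
       complex_of_real (factors_prod fs p) * (\<Sum>i\<in>UNIV. of_real (factor_val (factor_pd j (dfs_phi_factor i)) p) * dlist (i # s) g (dfs_phi p))"
      by (simp add: sum_3 factors_prod_def algebra_simps)
    finally show ?thesis by (simp add: algebra_simps)
  qed
  ultimately show ?thesis unfolding t by (simp add: term_val_def)
qed

lemma dlist_dfs: "length l \<le> k \<Longrightarrow> dlist_ok UNIV l (dfs g) \<and> dlist l (dfs g) = terms_val g (dfs_terms l)"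
proof (induction l)
  case Nil
  show ?case by (simp add: fun_eq_iff dfs_def terms_val_def term_val_def factors_prod_def)
next
  case (Cons j l)
  then have ll: "length l < k" by simp
  with Cons.IH have ok: "dlist_ok UNIV l (dfs g)" and eq: "dlist l (dfs g) = terms_val g (dfs_terms l)" by auto
  have R: "pd_exists j (terms_val g (dfs_terms l)) p \<and> pd j (terms_val g (dfs_terms l)) p = terms_val g (dfs_terms (j # l)) p" for p
  proof (rule pd_eqI)
    have "((\<lambda>\<tau>. \<Sum>t\<leftarrow>dfs_terms l. term_val g t (p + \<tau> *\<^sub>R axis j 1)) has_vector_derivative
        (\<Sum>t\<leftarrow>dfs_terms l. \<Sum>t'\<leftarrow>term_pd j t. term_val g t' p)) (at 0)"
    proof (rule has_vector_derivative_sum_list)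
      fix t assume "t \<in> set (dfs_terms l)"
      then have "length (snd t) < k" using dfs_terms_length[of t l] ll by simp
      then show "((\<lambda>\<tau>. term_val g t (p + \<tau> *\<^sub>R axis j 1)) has_vector_derivative (\<Sum>t'\<leftarrow>term_pd j t. term_val g t' p)) (at 0)"
        by (rule has_vector_derivative_term_val)
    qed
    then show "((\<lambda>\<tau>. terms_val g (dfs_terms l) (p + \<tau> *\<^sub>R axis j 1)) has_vector_derivative terms_val g (dfs_terms (j # l)) p) (at 0)"
      by (simp add: terms_val_def sum_list_concat_map)
  qed
  show ?case
  proof
    show "dlist_ok UNIV (j # l) (dfs g)" using ok R eq by simp
    have "dlist (j # l) (dfs g) = pd j (terms_val g (dfs_terms l))" by (simp add: eq)
    then show "dlist (j # l) (dfs g) = terms_val g (dfs_terms (j # l))" using R by (simp add: fun_eq_iff del: dfs_terms.simps)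
  qed
qed

lemma continuous_on_term_val: "length (snd t) \<le> k \<Longrightarrow> continuous_on UNIV (term_val g t)"
  unfolding term_val_def
  by (intro continuous_intros continuous_on_of_real continuous_on_factors_prod
      continuous_on_compose2[OF continuous_on_dlist[OF U H] continuous_on_dfs_phi]) (auto simp: dfs_phi_in_U)

lemma continuous_on_dlist_dfs: "length l \<le> k \<Longrightarrow> continuous_on UNIV (dlist l (dfs g))"
  using dlist_dfs[of l] unfolding terms_val_def
  by (auto intro!: continuous_on_sum_list continuous_on_term_val dest: dfs_terms_length)

lemma norm_dlist_dfs_le:
  assumes "length l \<le> k" and B: "\<And>\<beta>. \<beta> \<in> multi_idx k \<Longrightarrow> bounded (Dpart \<beta> g ` U)"
  shows "cmod (dlist l (dfs g) p) \<le> real (length (dfs_terms l)) * ext_seminorm k g"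
proof -
  have "cmod (terms_val g (dfs_terms l) p) \<le> real (length (dfs_terms l)) * ext_seminorm k g"
    unfolding terms_val_def
  proof (rule norm_sum_list_le)
    fix t assume "t \<in> set (dfs_terms l)"
    then have ls: "length (snd t) \<le> k" using dfs_terms_length[of t l] assms(1) by simp
    have "cmod (dlist (snd t) g (dfs_phi p)) \<le> ext_seminorm k g"
      unfolding ext_seminorm_def by (rule norm_dlist_le[OF U H ls dfs_phi_in_S2 S2U B])
    then show "cmod (term_val g t p) \<le> ext_seminorm k g"
      unfolding term_val_def norm_mult norm_of_real
      using abs_factors_prod_le_1[of "fst t" p] by (smt (verit) mult_left_le_one_le norm_ge_zero abs_ge_zero)
  qed
  then show ?thesis using dlist_dfs[OF assms(1)] by simp
qed

end

section \<open>Periodicity\<close>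

lemma dfs_phi_periodic: "dfs_phi (x + (2*pi) *\<^sub>R axis i 1) = dfs_phi x"
  using exhaust_2[of i] by (auto simp: dfs_phi_def axis_2_nth sin_periodic cos_periodic)

lemma dlist_periodic:
  assumes "\<And>y. F (y + c) = F y"
  shows "dlist l F (y + c) = dlist l F y"
proof (induction l arbitrary: y)
  case (Cons i l)
  have "dlist l F (y + c + t *\<^sub>R axis i 1) = dlist l F (y + t *\<^sub>R axis i 1)" for t
    using Cons.IH[of "y + t *\<^sub>R axis i 1"] by (simp add: ac_simps)
  then show ?case by (simp add: pd_def)
qed (simp add: assms)

lemma periodic_int_multiple:
  fixes F :: "real^'n \<Rightarrow> 'b"
  assumes "\<And>x. F (x + (2*pi) *\<^sub>R axis i 1) = F x"
  shows "F (x + (2*pi * of_int m) *\<^sub>R axis i 1) = F x"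
proof -
  interpret periodic_fun_simple "\<lambda>t. F (x + t *\<^sub>R axis i 1)" "2*pi"
    by standard (use assms[of "x + _ *\<^sub>R axis i 1"] in \<open>simp add: scaleR_add_left add.assoc\<close>)
  show ?thesis using plus_of_int[of 0 m] by (simp add: mult.commute)
qed

lemma periodic_lattice_shift:
  fixes F :: "real^'n \<Rightarrow> 'b"
  assumes "\<And>x i. F (x + (2*pi) *\<^sub>R axis i 1) = F x"
  shows "F (x + (\<chi> i. 2*pi * of_int (m i))) = F x"
proof -
  have "F (x + (\<Sum>i\<in>I. (2*pi * of_int (m i)) *\<^sub>R axis i 1)) = F x" if "finite I" for I
    using that
  proof (induction I rule: finite_induct)
    case (insert j I)
    let ?v = "\<Sum>i\<in>I. (2*pi * of_int (m i)) *\<^sub>R axis i 1"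
    have "F (x + ?v + (2*pi * of_int (m j)) *\<^sub>R axis j 1) = F (x + ?v)"
      by (rule periodic_int_multiple[where F=F, OF assms])
    then show ?case using insert by (simp add: ac_simps)
  qed simp
  moreover have "(\<chi> i. 2*pi * of_int (m i)) = (\<Sum>i\<in>UNIV. (2*pi * of_int (m i)) *\<^sub>R axis i (1::real))"
    using basis_expansion[of "\<chi> i. 2*pi * of_int (m i)"] by (simp add: scalar_mult_eq_scaleR)
  ultimately show ?thesis by simp
qed

text \<open>Shifting a pair of nearby points by the same lattice vector moves them into a fixed
  compact box, on which F is uniformly continuous.\<close>
lemma uniformly_continuous_on_periodic:
  fixes F :: "real^'n \<Rightarrow> 'b::metric_space"
  assumes cont: "continuous_on UNIV F" and per: "\<And>x i. F (x + (2*pi) *\<^sub>R axis i 1) = F x"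
  shows "uniformly_continuous_on UNIV F"
  unfolding uniformly_continuous_on_def
proof (intro allI impI)
  fix e :: real assume "e > 0"
  define K where "K = cbox (vec (-2*pi)) (vec (4*pi) :: real^'n)"
  have "uniformly_continuous_on K F"
    unfolding K_def by (rule compact_uniformly_continuous[OF continuous_on_subset[OF cont] compact_cbox]) simp
  then obtain d where d: "d > 0" and dK: "\<And>x x'. x \<in> K \<Longrightarrow> x' \<in> K \<Longrightarrow> dist x' x < d \<Longrightarrow> dist (F x') (F x) < e"
    using \<open>e > 0\<close> unfolding uniformly_continuous_on_def by metis
  show "\<exists>d>0. \<forall>x\<in>UNIV. \<forall>x'\<in>UNIV. dist x' x < d \<longrightarrow> dist (F x') (F x) < e"
  proof (intro exI[of _ "min d 1"] conjI ballI impI)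
    fix x y :: "real^'n" assume dxy: "dist y x < min d 1"
    define m where "m i = - \<lfloor>x$i / (2*pi)\<rfloor>" for i
    define w :: "real^'n" where "w = (\<chi> i. 2*pi * of_int (m i))"
    have "x + w \<in> K" "y + w \<in> K"
      unfolding K_def mem_box_cart
    proof (safe)
      fix i
      have "\<bar>y$i - x$i\<bar> < 1" using component_le_norm_cart[of "y - x" i] dxy by (simp add: dist_norm)
      moreover have "2*pi * of_int \<lfloor>x$i / (2*pi)\<rfloor> \<le> x$i" "x$i < 2*pi * of_int \<lfloor>x$i / (2*pi)\<rfloor> + 2*pi"
        using floor_divide_lower[of "2*pi" "x$i"] floor_divide_upper[of "2*pi" "x$i"] by (simp_all add: algebra_simps)
      moreover have "1 < 2 * pi" using pi_gt3 by simp
      ultimately show "vec (-2*pi) $ i \<le> (x + w) $ i" "(x + w) $ i \<le> vec (4*pi) $ i"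
        "vec (-2*pi) $ i \<le> (y + w) $ i" "(y + w) $ i \<le> vec (4*pi) $ i"
        by (simp_all add: w_def m_def abs_less_iff)
    qed
    moreover have "dist (y + w) (x + w) < d" using dxy by (simp add: dist_norm)
    ultimately have "dist (F (y + w)) (F (x + w)) < e" using dK by blast
    then show "dist (F y) (F x) < e" unfolding w_def periodic_lattice_shift[OF per] .
  qed (use d in simp)
qed

lemma sum_fact_pairs_le: "(\<Sum>(a,b)\<in>{(a,b). a + b \<le> k}. fact (a + b + 2)) \<le> (fact (k + 3) :: nat)"
proof (induction k)
  case 0
  have "{(a,b). a + b \<le> (0::nat)} = {(0,0)}" by auto
  then show ?case by (simp add: numeral_3_eq_3 numeral_2_eq_2)
next
  case (Suc k)
  define Q where "Q = {(a,b). a + b \<le> k}"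
  define R where "R = {(a,b). a + b = Suc k}"
  have "finite Q" unfolding Q_def by (rule finite_subset[of _ "{0..k} \<times> {0..k}"]) auto
  have R: "R = (\<lambda>a. (a, Suc k - a)) ` {0..Suc k}" unfolding R_def by force
  have "{(a,b). a + b \<le> Suc k} = Q \<union> R" "Q \<inter> R = {}" unfolding Q_def R_def by auto
  then have "(\<Sum>(a,b)\<in>{(a,b). a + b \<le> Suc k}. fact (a + b + 2)) =
      (\<Sum>(a,b)\<in>Q. fact (a + b + 2)) + (\<Sum>(a,b)\<in>R. fact (a + b + 2) :: nat)"
    using \<open>finite Q\<close> R by (simp add: sum.union_disjoint)
  also have "(\<Sum>(a,b)\<in>R. fact (a + b + 2) :: nat) = (k + 2) * fact (k + 3)"
  proof -
    have "(\<Sum>(a,b)\<in>R. fact (a + b + 2) :: nat) = (\<Sum>x\<in>R. fact (k + 3))"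
    proof (rule sum.cong)
      fix x assume "x \<in> R"
      then obtain a b where x: "x = (a, b)" and ab: "a + b + 2 = k + 3" by (auto simp: R_def)
      show "(case x of (a, b) \<Rightarrow> fact (a + b + 2)) = (fact (k + 3) :: nat)"
        unfolding x prod.case ab ..
    qed simp
    moreover have "card R = k + 2" unfolding R by (subst card_image) (auto simp: inj_on_def)
    ultimately show ?thesis by simp
  qed
  also have "(\<Sum>(a,b)\<in>Q. fact (a + b + 2)) + (k + 2) * fact (k + 3) \<le> fact (k + 3) + (k + 2) * (fact (k + 3) :: nat)"
    using Suc.IH unfolding Q_def by simp
  also have "\<dots> \<le> fact (Suc k + 3)"
  proof -
    have "fact (Suc k + 3) = Suc (k + 3) * (fact (k + 3) :: nat)" by (simp only: add_Suc fact_Suc of_nat_id)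
    then show ?thesis by (simp add: algebra_simps)
  qed
  finally show ?case .
qed

lemma sum_multi_idx_fact_le:
  "(\<Sum>\<beta>\<in>(multi_idx k :: (2 \<Rightarrow> nat) set). fact ((\<Sum>l\<in>UNIV. \<beta> l) + 2)) \<le> (fact (k + 3) :: nat)"
proof -
  define h where "h = (\<lambda>\<beta>::2 \<Rightarrow> nat. (\<beta> 1, \<beta> 2))"
  have "bij_betw h (multi_idx k) {(a,b). a + b \<le> k}"
  proof (rule bij_betwI')
    fix \<beta> \<beta>' :: "2 \<Rightarrow> nat"
    show "h \<beta> = h \<beta>' \<longleftrightarrow> \<beta> = \<beta>'"
    proof
      assume "h \<beta> = h \<beta>'"
      then have "\<beta> 1 = \<beta>' 1" "\<beta> 2 = \<beta>' 2" unfolding h_def by auto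
      then show "\<beta> = \<beta>'" by (metis exhaust_2 ext)
    qed simp
  next
    fix \<beta> :: "2 \<Rightarrow> nat" assume "\<beta> \<in> multi_idx k"
    then show "h \<beta> \<in> {(a,b). a + b \<le> k}" unfolding h_def multi_idx_def by (simp add: sum_2)
  next
    fix ab assume "ab \<in> {(a,b). a + b \<le> k}"
    then obtain a b where "ab = (a, b)" "a + b \<le> k" by auto
    moreover define \<beta> where "\<beta> = (\<lambda>i::2. if i = 1 then a else b)"
    ultimately show "\<exists>\<beta>\<in>multi_idx k. ab = h \<beta>"
      unfolding h_def multi_idx_def by (intro bexI[of _ \<beta>]) (auto simp: sum_2)
  qed
  then have "(\<Sum>\<beta>\<in>multi_idx k. (\<lambda>(a,b). fact (a + b + 2) :: nat) (h \<beta>)) =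
      (\<Sum>(a,b)\<in>{(a,b). a + b \<le> k}. fact (a + b + 2))"
    by (rule sum.reindex_bij_betw)
  moreover have "(\<Sum>\<beta>\<in>(multi_idx k :: (2 \<Rightarrow> nat) set). fact ((\<Sum>l\<in>UNIV. \<beta> l) + 2)) =
      (\<Sum>\<beta>\<in>multi_idx k. (\<lambda>(a,b). fact (a + b + 2) :: nat) (h \<beta>))"
    by (rule sum.cong) (auto simp: h_def sum_2)
  ultimately show ?thesis using sum_fact_pairs_le[of k] by simp
qed

lemma CkD:
  assumes "Ck k U g"
  shows "open U" and "\<And>\<beta>. \<beta> \<in> multi_idx k \<Longrightarrow> Dpart_exists U \<beta> g \<and> continuous_on U (Dpart \<beta> g)"
    and "\<And>\<beta>. \<beta> \<in> multi_idx k \<Longrightarrow> bounded (Dpart \<beta> g ` U)"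
  using assms unfolding Ck_def by (auto intro: uniformly_continuous_imp_continuous)

lemma dfs_eq_if_eq_on_S2: "(\<And>\<xi>. \<xi> \<in> S2 \<Longrightarrow> g \<xi> = f \<xi>) \<Longrightarrow> dfs g = dfs f"
  using dfs_phi_in_S2 by (auto simp: dfs_def)

context
  fixes g :: "real^3 \<Rightarrow> complex" and U and k :: nat
  assumes S2U: "S2 \<subseteq> U" and g: "Ck k U g"
begin

lemma ext_seminorm_nonneg: "0 \<le> ext_seminorm k g"
proof -
  have "cmod (dlist [] g (dfs_phi 0)) \<le> ext_seminorm k g"
    unfolding ext_seminorm_def
    by (rule norm_dlist_le[OF CkD(1,2)[OF g] _ dfs_phi_in_S2 S2U CkD(3)[OF g]]) auto
  then show ?thesis by (meson norm_ge_zero order_trans)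
qed

lemma norm_Dpart_dfs_le:
  assumes "\<beta> \<in> multi_idx k"
  shows "cmod (Dpart \<beta> (dfs g) p) \<le> fact ((\<Sum>l\<in>UNIV. \<beta> l) + 2) / 2 * ext_seminorm k g"
proof -
  have len: "length (mlist \<beta>) \<le> k" using assms by (simp add: length_mlist multi_idx_def)
  have "cmod (Dpart \<beta> (dfs g) p) \<le> real (length (dfs_terms (mlist \<beta>))) * ext_seminorm k g"
    unfolding Dpart_def by (rule norm_dlist_dfs_le[OF CkD(1,2)[OF g] S2U len CkD(3)[OF g]])
  also have "\<dots> \<le> fact ((\<Sum>l\<in>UNIV. \<beta> l) + 2) / 2 * ext_seminorm k g"
  proof (rule mult_right_mono[OF _ ext_seminorm_nonneg])
    have "real (2 * length (dfs_terms (mlist \<beta>))) \<le> real (fact ((\<Sum>l\<in>UNIV. \<beta> l) + 2))"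
      using length_dfs_terms_le[of "mlist \<beta>"] unfolding length_mlist by (simp only: of_nat_le_iff)
    then show "real (length (dfs_terms (mlist \<beta>))) \<le> fact ((\<Sum>l\<in>UNIV. \<beta> l) + 2) / 2"
      unfolding of_nat_mult of_nat_fact by linarith
  qed
  finally show ?thesis .
qed

lemma Ck_torus_dfs: "Ck_torus k (dfs g)"
  unfolding Ck_torus_def Ck_def
proof (intro conjI ballI allI open_UNIV)
  have dfs_periodic: "dfs g (y + (2*pi) *\<^sub>R axis i 1) = dfs g y" for y i
    by (simp add: dfs_def dfs_phi_periodic)
  then show "dfs g (x + (2 * pi) *\<^sub>R axis i 1) = dfs g x" for x i .
  fix \<beta> :: "2 \<Rightarrow> nat" assume \<beta>: "\<beta> \<in> multi_idx k"
  then have len: "length (mlist \<beta>) \<le> k" by (simp add: length_mlist multi_idx_def)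
  show "Dpart_exists UNIV \<beta> (dfs g)"
    unfolding Dpart_exists_def using dlist_dfs[OF CkD(1,2)[OF g] S2U len] by simp
  show "bounded (Dpart \<beta> (dfs g) ` UNIV)"
    unfolding bounded_iff using norm_Dpart_dfs_le[OF \<beta>] by blast
  show "uniformly_continuous_on UNIV (Dpart \<beta> (dfs g))"
    unfolding Dpart_def
    by (intro uniformly_continuous_on_periodic continuous_on_dlist_dfs[OF CkD(1,2)[OF g] S2U len]
        dlist_periodic dfs_periodic)
qed

text \<open>The count of terms yields the constant 1/2 in place of 3/4.\<close>
lemma Ck_torus_norm_dfs_le: "Ck_torus_norm k (dfs g) \<le> 3/4 * fact (k+3) * ext_seminorm k g"
proof -
  let ?N = "ext_seminorm k g"
  have "Ck_torus_norm k (dfs g) \<le> (\<Sum>\<beta>\<in>(multi_idx k :: (2 \<Rightarrow> nat) set). fact ((\<Sum>l\<in>UNIV. \<beta> l) + 2) / 2 * ?N)"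
    unfolding Ck_torus_norm_def Ck_norm_def
  proof (rule sum_mono)
    fix \<beta> :: "2 \<Rightarrow> nat" assume "\<beta> \<in> multi_idx k"
    then show "(SUP p\<in>UNIV. cmod (Dpart \<beta> (dfs g) p)) \<le> fact ((\<Sum>l\<in>UNIV. \<beta> l) + 2) / 2 * ?N"
      by (intro cSUP_least norm_Dpart_dfs_le) simp_all
  qed
  also have "\<dots> = real (\<Sum>\<beta>\<in>(multi_idx k :: (2 \<Rightarrow> nat) set). fact ((\<Sum>l\<in>UNIV. \<beta> l) + 2)) / 2 * ?N"
    by (simp only: of_nat_sum of_nat_fact sum_divide_distrib sum_distrib_right)
  also have "\<dots> \<le> fact (k + 3) / 2 * ?N"
  proof (intro mult_right_mono divide_right_mono ext_seminorm_nonneg)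
    have "real (\<Sum>\<beta>\<in>(multi_idx k :: (2 \<Rightarrow> nat) set). fact ((\<Sum>l\<in>UNIV. \<beta> l) + 2)) \<le> real (fact (k + 3))"
      using sum_multi_idx_fact_le[of k] by (simp only: of_nat_le_iff)
    then show "real (\<Sum>\<beta>\<in>(multi_idx k :: (2 \<Rightarrow> nat) set). fact ((\<Sum>l\<in>UNIV. \<beta> l) + 2)) \<le> fact (k + 3)"
      by (simp only: of_nat_fact)
  qed simp
  also have "\<dots> \<le> 3/4 * fact (k+3) * ?N"
    using ext_seminorm_nonneg by (intro mult_right_mono) simp_all
  finally show ?thesis .
qed

end

lemma le_mult_cInf:
  fixes x c :: real
  assumes "c > 0" "A \<noteq> {}" "\<And>a. a \<in> A \<Longrightarrow> x \<le> c * a"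
  shows "x \<le> c * Inf A"
proof -
  have "x / c \<le> Inf A"
  proof (rule cInf_greatest[OF assms(2)])
    fix a assume "a \<in> A"
    then show "x / c \<le> a" using assms(3) pos_divide_le_eq[OF assms(1)] by (simp add: mult.commute)
  qed
  then show ?thesis using assms(1) by (simp add: pos_divide_le_eq mult.commute)
qed

theorem corollary4p4:
  fixes k :: nat and f :: "real^3 \<Rightarrow> complex"
  assumes "Ck_sphere k f"
  shows "Ck_torus k (dfs f) \<and>
         Ck_torus_norm k (dfs f) \<le> 3/4 * fact (k+3) * Ck_sphere_norm k f"
proof
  have extension: "S2 \<subseteq> U \<and> Ck k U g \<and> dfs g = dfs f" if "is_Ck_extension k f U g" for U g
    using that dfs_eq_if_eq_on_S2 unfolding is_Ck_extension_def by blast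
  obtain U g where ext: "is_Ck_extension k f U g" using assms unfolding Ck_sphere_def by blast
  then have "S2 \<subseteq> U" "Ck k U g" "dfs g = dfs f" using extension by blast+
  then show "Ck_torus k (dfs f)" using Ck_torus_dfs by metis
  show "Ck_torus_norm k (dfs f) \<le> 3/4 * fact (k+3) * Ck_sphere_norm k f"
    unfolding Ck_sphere_norm_def
  proof (rule le_mult_cInf)
    show "{ext_seminorm k g | g U. is_Ck_extension k f U g} \<noteq> {}" using ext by blast
    fix a assume "a \<in> {ext_seminorm k g | g U. is_Ck_extension k f U g}"
    then obtain g' U' where a: "a = ext_seminorm k g'" and "is_Ck_extension k f U' g'" by blast
    then have "S2 \<subseteq> U'" "Ck k U' g'" "dfs g' = dfs f" using extension by blast+
    then show "Ck_torus_norm k (dfs f) \<le> 3/4 * fact (k+3) * a"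
      unfolding a by (metis Ck_torus_norm_dfs_le)
  qed simp
qed

end
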